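(* Let $G$ be a multiplicative monoid with identity, let $N$ be a $G$-graded near-ring and let $P$, $I$ be graded ideals of $N$ with $I\subseteq P$. Let $\pi:N\to\bar N:=N/I$ be the canonical epimorphism. If $P$ is a graded almost prime ideal of $N$, then $\pi(P)$ is a graded almost prime ideal of $\bar N$.
   Context: A near-ring $(N,+,\cdot)$ is a set with two binary operations such that $(N,+)$ is a group (not necessarily abelian), $(N,\cdot)$ is a semigroup, and $(a+b)y = ay+by$ for all $a,b,y\in N$. For a multiplicative monoid $G$ with identity, $N$ is a $G$-graded near-ring if there is a family $\{N_\sigma\}_{\sigma\in G}$ of additive normal subgroups of $N$ with $N=\bigoplus_{\sigma\in G}N_\sigma$ and $N_\sigma N_\tau\subseteq N_{\sigma\tau}$. An ideal $P$ is graded if $P=\bigoplus_{\sigma}(P\cap N_\sigma)$; for a graded ideal $I$, $N/I$ is $G$-graded with components $(N_\sigma+I)/I$. For ideals $I,J$, $IJ$ denotes their product and $P^2=PP$ (the paper writes $P^2\cap N$, with $N$ the ambient near-ring). A graded ideal $P$ is graded almost prime if for all graded ideals $I,J$ with $IJ\subseteq P$ and $IJ\not\subseteq P^2\cap N$, either $I\subseteq P$ or $J\subseteq P$. *)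

theory Defs
  imports Main
begin

record 'a nearring =
  carrier :: "'a set"
  nadd :: "'a \<Rightarrow> 'a \<Rightarrow> 'a"
  nmul :: "'a \<Rightarrow> 'a \<Rightarrow> 'a"
  nzero :: 'a
  nneg :: "'a \<Rightarrow> 'a"

definition nsub :: "('a, 'b) nearring_scheme \<Rightarrow> 'a \<Rightarrow> 'a \<Rightarrow> 'a" where
  "nsub R x y = nadd R x (nneg R y)"

definition near_ring :: "('a, 'b) nearring_scheme \<Rightarrow> bool" where
  "near_ring R \<longleftrightarrow>
     (\<forall>x\<in>carrier R. \<forall>y\<in>carrier R. nadd R x y \<in> carrier R \<and> nmul R x y \<in> carrier R) \<and>
     nzero R \<in> carrier R \<and> (\<forall>x\<in>carrier R. nneg R x \<in> carrier R) \<and>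
     (\<forall>x\<in>carrier R. \<forall>y\<in>carrier R. \<forall>z\<in>carrier R.
        nadd R (nadd R x y) z = nadd R x (nadd R y z)) \<and>
     (\<forall>x\<in>carrier R. nadd R (nzero R) x = x \<and> nadd R x (nzero R) = x) \<and>
     (\<forall>x\<in>carrier R. nadd R (nneg R x) x = nzero R \<and> nadd R x (nneg R x) = nzero R) \<and>
     (\<forall>x\<in>carrier R. \<forall>y\<in>carrier R. \<forall>z\<in>carrier R.
        nmul R (nmul R x y) z = nmul R x (nmul R y z)) \<and>
     (\<forall>a\<in>carrier R. \<forall>b\<in>carrier R. \<forall>y\<in>carrier R.
        nmul R (nadd R a b) y = nadd R (nmul R a y) (nmul R b y))"

definition add_normal_subgroup :: "('a, 'b) nearring_scheme \<Rightarrow> 'a set \<Rightarrow> bool" where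
  "add_normal_subgroup R H \<longleftrightarrow>
     H \<subseteq> carrier R \<and> nzero R \<in> H \<and>
     (\<forall>x\<in>H. \<forall>y\<in>H. nadd R x y \<in> H) \<and> (\<forall>x\<in>H. nneg R x \<in> H) \<and>
     (\<forall>n\<in>carrier R. \<forall>h\<in>H. nsub R (nadd R n h) n \<in> H)"

definition nr_ideal :: "('a, 'b) nearring_scheme \<Rightarrow> 'a set \<Rightarrow> bool" where
  "nr_ideal R I \<longleftrightarrow>
     add_normal_subgroup R I \<and>
     (\<forall>i\<in>I. \<forall>n\<in>carrier R. nmul R i n \<in> I) \<and>
     (\<forall>n\<in>carrier R. \<forall>n'\<in>carrier R. \<forall>i\<in>I.
        nsub R (nmul R n (nadd R n' i)) (nmul R n n') \<in> I)"

inductive_set gen_add :: "('a, 'b) nearring_scheme \<Rightarrow> 'a set \<Rightarrow> 'a set"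
  for R :: "('a, 'b) nearring_scheme" and S :: "'a set" where
  gen_incl: "x \<in> S \<Longrightarrow> x \<in> gen_add R S"
| gen_zero: "nzero R \<in> gen_add R S"
| gen_neg: "x \<in> gen_add R S \<Longrightarrow> nneg R x \<in> gen_add R S"
| gen_add: "x \<in> gen_add R S \<Longrightarrow> y \<in> gen_add R S \<Longrightarrow> nadd R x y \<in> gen_add R S"

definition internal_direct_sum ::
  "('a, 'b) nearring_scheme \<Rightarrow> 'a set \<Rightarrow> ('g \<Rightarrow> 'a set) \<Rightarrow> bool" where
  "internal_direct_sum R A F \<longleftrightarrow>
     A = gen_add R (\<Union>\<sigma>. F \<sigma>) \<and>
     (\<forall>\<sigma>. F \<sigma> \<inter> gen_add R (\<Union>\<tau>\<in>-{\<sigma>}. F \<tau>) = {nzero R})"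

definition graded_near_ring ::
  "('a, 'b) nearring_scheme \<Rightarrow> ('g::monoid_mult \<Rightarrow> 'a set) \<Rightarrow> bool" where
  "graded_near_ring R F \<longleftrightarrow>
     near_ring R \<and> (\<forall>\<sigma>. add_normal_subgroup R (F \<sigma>)) \<and>
     internal_direct_sum R (carrier R) F \<and>
     (\<forall>\<sigma> \<tau>. \<forall>x\<in>F \<sigma>. \<forall>y\<in>F \<tau>. nmul R x y \<in> F (\<sigma> * \<tau>))"

definition graded_ideal ::
  "('a, 'b) nearring_scheme \<Rightarrow> ('g::monoid_mult \<Rightarrow> 'a set) \<Rightarrow> 'a set \<Rightarrow> bool" where
  "graded_ideal R F P \<longleftrightarrow> nr_ideal R P \<and> internal_direct_sum R P (\<lambda>\<sigma>. P \<inter> F \<sigma>)"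

definition set_prod :: "('a, 'b) nearring_scheme \<Rightarrow> 'a set \<Rightarrow> 'a set \<Rightarrow> 'a set" where
  "set_prod R I J = {nmul R i j | i j. i \<in> I \<and> j \<in> J}"

definition graded_almost_prime ::
  "('a, 'b) nearring_scheme \<Rightarrow> ('g::monoid_mult \<Rightarrow> 'a set) \<Rightarrow> 'a set \<Rightarrow> bool" where
  "graded_almost_prime R F P \<longleftrightarrow>
     graded_ideal R F P \<and>
     (\<forall>I J. graded_ideal R F I \<and> graded_ideal R F J \<and>
        set_prod R I J \<subseteq> P \<and> \<not> set_prod R I J \<subseteq> set_prod R P P \<inter> carrier R
        \<longrightarrow> I \<subseteq> P \<or> J \<subseteq> P)"

text \<open>Quotient near-ring N/I: elements are the cosets a + I; operations via
  representatives (well defined when I is an ideal).\<close>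

definition coset :: "('a, 'b) nearring_scheme \<Rightarrow> 'a set \<Rightarrow> 'a \<Rightarrow> 'a set" where
  "coset R I a = {nadd R a i | i. i \<in> I}"

definition quot :: "('a, 'b) nearring_scheme \<Rightarrow> 'a set \<Rightarrow> 'a set nearring" where
  "quot R I =
     \<lparr> carrier = coset R I ` carrier R,
       nadd = (\<lambda>A B. \<Union>{coset R I (nadd R x y) | x y. x \<in> A \<and> y \<in> B}),
       nmul = (\<lambda>A B. \<Union>{coset R I (nmul R x y) | x y. x \<in> A \<and> y \<in> B}),
       nzero = coset R I (nzero R),
       nneg = (\<lambda>A. \<Union>{coset R I (nneg R x) | x. x \<in> A}) \<rparr>"

text \<open>Canonical grading of N/I: components (N_sigma + I)/I = pi(N_sigma).\<close>

definition quot_grading ::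
  "('a, 'b) nearring_scheme \<Rightarrow> 'a set \<Rightarrow> ('g \<Rightarrow> 'a set) \<Rightarrow> 'g \<Rightarrow> 'a set set" where
  "quot_grading R I F = (\<lambda>\<sigma>. coset R I ` F \<sigma>)"

end

theory Submission
  imports Defs
begin

text \<open>The canonical map \<open>\<pi> : N \<rightarrow> N/I\<close> induces mutually inverse bijections
  \<open>J \<mapsto> \<pi>(J)\<close>, \<open>J' \<mapsto> \<pi>\<^sup>-\<^sup>1(J')\<close> between the ideals of \<open>N\<close> containing \<open>I\<close> and the
  ideals of \<open>N/I\<close>, and both directions preserve gradedness.  The delicate point is the
  independence of the components of \<open>\<pi>(P)\<close>: an element of degree \<open>\<sigma>\<close> commutes with the
  subgroup generated by the other components (their commutator lies in both), so every
  element of the graded ideal \<open>I\<close> splits into a part of degree \<open>\<sigma>\<close> in \<open>I\<close> plus a part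
  from the other components; hence an element of degree \<open>\<sigma>\<close> that is congruent modulo \<open>I\<close>
  to a sum of elements of other degrees already lies in \<open>I\<close>.

  Moreover \<open>\<pi>(A)\<pi>(B) = \<pi>(AB)\<close>.  So if \<open>A', B'\<close> are graded ideals of \<open>N/I\<close> with
  \<open>A'B' \<subseteq> \<pi>(P)\<close> but \<open>A'B'\<close> not contained in \<open>\<pi>(P)\<^sup>2\<close>, their preimages \<open>A, B\<close> are graded
  ideals with \<open>AB \<subseteq> \<pi>\<^sup>-\<^sup>1(\<pi>(P)) = P\<close> (as \<open>I \<subseteq> P\<close>) but \<open>AB\<close> not contained in \<open>P\<^sup>2\<close>;
  hence \<open>A \<subseteq> P\<close> or \<open>B \<subseteq> P\<close>, and applying \<open>\<pi>\<close> gives \<open>A' \<subseteq> \<pi>(P)\<close> or \<open>B' \<subseteq> \<pi>(P)\<close>.\<close>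

lemma gen_add_mono: "S \<subseteq> T \<Longrightarrow> gen_add R S \<subseteq> gen_add R T"
proof
  fix x assume "x \<in> gen_add R S" and "S \<subseteq> T"
  then show "x \<in> gen_add R T"
    by (induction rule: gen_add.induct) (auto intro: gen_add.intros)
qed

lemma gen_add_least:
  assumes "add_normal_subgroup R H" and "S \<subseteq> H"
  shows "gen_add R S \<subseteq> H"
proof
  fix x assume "x \<in> gen_add R S"
  then show "x \<in> H" using assms
    by (induction rule: gen_add.induct) (auto simp: add_normal_subgroup_def)
qed

lemma nr_ideal_normal_subgroup: "nr_ideal R J \<Longrightarrow> add_normal_subgroup R J"
  by (simp add: nr_ideal_def)

lemma nr_ideal_subset_carrier: "nr_ideal R J \<Longrightarrow> J \<subseteq> carrier R"
  and nr_ideal_nzero: "nr_ideal R J \<Longrightarrow> nzero R \<in> J"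
  by (simp_all add: nr_ideal_def add_normal_subgroup_def)

lemma graded_ideal_nr_ideal: "graded_ideal R F J \<Longrightarrow> nr_ideal R J"
  and graded_ideal_gen_add: "graded_ideal R F J \<Longrightarrow> J = gen_add R (\<Union>\<sigma>. J \<inter> F \<sigma>)"
  by (simp_all add: graded_ideal_def internal_direct_sum_def)

lemma graded_idealI:
  assumes "nr_ideal R J" and "J = gen_add R (\<Union>\<sigma>. J \<inter> F \<sigma>)"
    and "\<And>\<sigma>. (J \<inter> F \<sigma>) \<inter> gen_add R (\<Union>\<tau>\<in>-{\<sigma>}. J \<inter> F \<tau>) = {nzero R}"
  shows "graded_ideal R F J"
  using assms by (simp add: graded_ideal_def internal_direct_sum_def)

lemma independent_components_restrict:
  assumes "F \<sigma> \<inter> gen_add R (\<Union>\<tau>\<in>-{\<sigma>}. F \<tau>) = {nzero R}"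
    and "nzero R \<in> P" and "nzero R \<in> F \<sigma>"
  shows "(P \<inter> F \<sigma>) \<inter> gen_add R (\<Union>\<tau>\<in>-{\<sigma>}. P \<inter> F \<tau>) = {nzero R}"
proof -
  have "gen_add R (\<Union>\<tau>\<in>-{\<sigma>}. P \<inter> F \<tau>) \<subseteq> gen_add R (\<Union>\<tau>\<in>-{\<sigma>}. F \<tau>)"
    by (rule gen_add_mono) blast
  then show ?thesis using assms gen_add.gen_zero[of R] by blast
qed

locale near_ring_base =
  fixes R :: "('a, 'b) nearring_scheme"
  assumes near_ring: "near_ring R"
begin

abbreviation radd (infixr "\<oplus>" 65) where "x \<oplus> y \<equiv> nadd R x y"
abbreviation rneg ("\<ominus> _" [81] 80) where "\<ominus> x \<equiv> nneg R x"
abbreviation rzero ("\<zero>") where "\<zero> \<equiv> nzero R"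
abbreviation rmul (infixl "\<otimes>" 70) where "x \<otimes> y \<equiv> nmul R x y"
abbreviation N where "N \<equiv> carrier R"

lemma nadd_closed [simp, intro]: "x \<in> N \<Longrightarrow> y \<in> N \<Longrightarrow> x \<oplus> y \<in> N"
  and nmul_closed [simp, intro]: "x \<in> N \<Longrightarrow> y \<in> N \<Longrightarrow> x \<otimes> y \<in> N"
  and nzero_closed [simp, intro]: "\<zero> \<in> N"
  and nneg_closed [simp, intro]: "x \<in> N \<Longrightarrow> \<ominus> x \<in> N"
  using near_ring unfolding near_ring_def by auto

lemma nadd_assoc [simp]: "x \<in> N \<Longrightarrow> y \<in> N \<Longrightarrow> z \<in> N \<Longrightarrow> (x \<oplus> y) \<oplus> z = x \<oplus> (y \<oplus> z)"
  and nadd_zero_left [simp]: "x \<in> N \<Longrightarrow> \<zero> \<oplus> x = x"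
  and nadd_zero_right [simp]: "x \<in> N \<Longrightarrow> x \<oplus> \<zero> = x"
  and nadd_neg_left [simp]: "x \<in> N \<Longrightarrow> \<ominus> x \<oplus> x = \<zero>"
  and nadd_neg_right [simp]: "x \<in> N \<Longrightarrow> x \<oplus> \<ominus> x = \<zero>"
  and nmul_distrib_right: "a \<in> N \<Longrightarrow> b \<in> N \<Longrightarrow> y \<in> N \<Longrightarrow> (a \<oplus> b) \<otimes> y = a \<otimes> y \<oplus> b \<otimes> y"
  using near_ring unfolding near_ring_def by auto

lemma nneg_nadd_cancel [simp]: "x \<in> N \<Longrightarrow> y \<in> N \<Longrightarrow> \<ominus> x \<oplus> (x \<oplus> y) = y"
  by (metis nadd_assoc nadd_neg_left nadd_zero_left nneg_closed)

lemma nadd_nneg_cancel [simp]: "x \<in> N \<Longrightarrow> y \<in> N \<Longrightarrow> x \<oplus> (\<ominus> x \<oplus> y) = y"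
  by (metis nadd_assoc nadd_neg_right nadd_zero_left nneg_closed)

lemma nneg_unique: "x \<in> N \<Longrightarrow> y \<in> N \<Longrightarrow> x \<oplus> y = \<zero> \<Longrightarrow> y = \<ominus> x"
  by (metis nneg_nadd_cancel nadd_zero_right nneg_closed)

lemma nneg_nneg [simp]: "x \<in> N \<Longrightarrow> \<ominus> (\<ominus> x) = x"
  by (metis nadd_neg_left nneg_closed nneg_unique)

lemma nneg_nadd [simp]:
  assumes "x \<in> N" "y \<in> N"
  shows "\<ominus> (x \<oplus> y) = \<ominus> y \<oplus> \<ominus> x"
proof -
  have "(x \<oplus> y) \<oplus> (\<ominus> y \<oplus> \<ominus> x) = \<zero>" using assms by simp
  then show ?thesis using assms by (metis nneg_unique nadd_closed nneg_closed)
qed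

lemma nneg_nzero [simp]: "\<ominus> \<zero> = \<zero>"
  by (metis nadd_zero_left nneg_closed nadd_neg_right nzero_closed)

lemma nsub_eq: "nsub R x y = x \<oplus> \<ominus> y"
  by (simp add: nsub_def)

lemma set_prod_subset_carrier: "X \<subseteq> N \<Longrightarrow> Y \<subseteq> N \<Longrightarrow> set_prod R X Y \<subseteq> N"
  unfolding set_prod_def by blast

lemma gen_add_subset_carrier: "S \<subseteq> N \<Longrightarrow> gen_add R S \<subseteq> N"
proof
  fix x assume "x \<in> gen_add R S" and "S \<subseteq> N"
  then show "x \<in> N" by (induction rule: gen_add.induct) auto
qed

lemma normal_subgroup_carrier: "add_normal_subgroup R H \<Longrightarrow> H \<subseteq> N"
  and normal_subgroup_zero: "add_normal_subgroup R H \<Longrightarrow> \<zero> \<in> H"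
  and normal_subgroup_add: "add_normal_subgroup R H \<Longrightarrow> x \<in> H \<Longrightarrow> y \<in> H \<Longrightarrow> x \<oplus> y \<in> H"
  and normal_subgroup_neg: "add_normal_subgroup R H \<Longrightarrow> x \<in> H \<Longrightarrow> \<ominus> x \<in> H"
  unfolding add_normal_subgroup_def by auto

lemma normal_subgroup_conj:
  "add_normal_subgroup R H \<Longrightarrow> n \<in> N \<Longrightarrow> h \<in> H \<Longrightarrow> n \<oplus> h \<oplus> \<ominus> n \<in> H"
  unfolding add_normal_subgroup_def nsub_eq by (metis nadd_assoc nneg_closed subsetD)

lemma normal_subgroup_conj_neg:
  "add_normal_subgroup R H \<Longrightarrow> n \<in> N \<Longrightarrow> h \<in> H \<Longrightarrow> \<ominus> n \<oplus> h \<oplus> n \<in> H"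
  using normal_subgroup_conj[of H "\<ominus> n" h] by simp

lemma gen_add_conj_closed:
  assumes "S \<subseteq> N" and conj_S: "\<And>n s. n \<in> N \<Longrightarrow> s \<in> S \<Longrightarrow> n \<oplus> s \<oplus> \<ominus> n \<in> gen_add R S"
    and "n \<in> N" and "h \<in> gen_add R S"
  shows "n \<oplus> h \<oplus> \<ominus> n \<in> gen_add R S"
  using \<open>h \<in> gen_add R S\<close>
proof (induction rule: gen_add.induct)
  case (gen_incl x)
  then show ?case using conj_S \<open>n \<in> N\<close> by blast
next
  case gen_zero
  then show ?case using \<open>n \<in> N\<close> by (simp add: gen_add.gen_zero)
next
  case (gen_neg x)
  have "x \<in> N" using gen_neg.hyps gen_add_subset_carrier \<open>S \<subseteq> N\<close> by blast
  with gen_add.gen_neg[OF gen_neg.IH] show ?case using \<open>n \<in> N\<close> by simp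
next
  case (gen_add x y)
  have "x \<in> N" "y \<in> N" using gen_add.hyps gen_add_subset_carrier \<open>S \<subseteq> N\<close> by blast+
  with gen_add.gen_add[OF gen_add.IH] show ?case using \<open>n \<in> N\<close> by simp
qed

end

locale quotient_near_ring = near_ring_base +
  fixes I :: "'a set"
  assumes ideal: "nr_ideal R I"
begin

abbreviation Q where "Q \<equiv> quot R I"
abbreviation \<pi> where "\<pi> \<equiv> coset R I"

lemma ideal_normal_subgroup: "add_normal_subgroup R I"
  using ideal by (rule nr_ideal_normal_subgroup)

lemma ideal_carrier [simp]: "i \<in> I \<Longrightarrow> i \<in> N"
  using normal_subgroup_carrier[OF ideal_normal_subgroup] by blast

lemma ideal_nzero [simp]: "\<zero> \<in> I"
  using normal_subgroup_zero[OF ideal_normal_subgroup] .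

lemma ideal_nadd [simp]: "x \<in> I \<Longrightarrow> y \<in> I \<Longrightarrow> x \<oplus> y \<in> I"
  using normal_subgroup_add[OF ideal_normal_subgroup] .

lemma ideal_nneg [simp]: "x \<in> I \<Longrightarrow> \<ominus> x \<in> I"
  using normal_subgroup_neg[OF ideal_normal_subgroup] .

lemma ideal_conj [simp]: "n \<in> N \<Longrightarrow> h \<in> I \<Longrightarrow> n \<oplus> h \<oplus> \<ominus> n \<in> I"
  using normal_subgroup_conj[OF ideal_normal_subgroup] .

lemma ideal_conj_neg [simp]: "n \<in> N \<Longrightarrow> h \<in> I \<Longrightarrow> \<ominus> n \<oplus> h \<oplus> n \<in> I"
  using normal_subgroup_conj_neg[OF ideal_normal_subgroup] .

lemma ideal_conj_neg_nadd [simp]: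
  assumes "n \<in> N" "h \<in> I" "z \<in> I"
  shows "\<ominus> n \<oplus> h \<oplus> n \<oplus> z \<in> I"
proof -
  have "(\<ominus> n \<oplus> h \<oplus> n) \<oplus> z \<in> I" using ideal_nadd[OF ideal_conj_neg] assms by blast
  moreover have "(\<ominus> n \<oplus> h \<oplus> n) \<oplus> z = \<ominus> n \<oplus> h \<oplus> n \<oplus> z" using assms by simp
  ultimately show ?thesis by metis
qed

lemma ideal_nmul_right: "i \<in> I \<Longrightarrow> n \<in> N \<Longrightarrow> i \<otimes> n \<in> I"
  and ideal_nmul_left: "n \<in> N \<Longrightarrow> n' \<in> N \<Longrightarrow> i \<in> I \<Longrightarrow> n \<otimes> (n' \<oplus> i) \<oplus> \<ominus> (n \<otimes> n') \<in> I"
  using ideal by (simp_all add: nr_ideal_def nsub_eq)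

lemma coset_self: "a \<in> N \<Longrightarrow> a \<in> \<pi> a"
  unfolding coset_def by (rule CollectI, rule exI[of _ \<zero>]) simp

lemma coset_eq_iff: "a \<in> N \<Longrightarrow> b \<in> N \<Longrightarrow> \<pi> a = \<pi> b \<longleftrightarrow> \<ominus> b \<oplus> a \<in> I"
proof
  assume "a \<in> N" "b \<in> N" and "\<pi> a = \<pi> b"
  then have "a \<in> \<pi> b" using coset_self by auto
  then obtain i where "i \<in> I" "a = b \<oplus> i" unfolding coset_def by auto
  then show "\<ominus> b \<oplus> a \<in> I" using \<open>b \<in> N\<close> by simp
next
  assume a: "a \<in> N" "b \<in> N" and "\<ominus> b \<oplus> a \<in> I"
  define i where "i = \<ominus> b \<oplus> a"
  have i: "i \<in> I" "i \<in> N" using \<open>\<ominus> b \<oplus> a \<in> I\<close> i_def by auto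
  have a_eq: "a = b \<oplus> i" and b_eq: "b = a \<oplus> \<ominus> i" using a by (simp_all add: i_def)
  show "\<pi> a = \<pi> b"
  proof
    show "\<pi> a \<subseteq> \<pi> b" unfolding coset_def
    proof clarify
      fix j assume "j \<in> I"
      then show "\<exists>k. a \<oplus> j = b \<oplus> k \<and> k \<in> I"
        using i a by (intro exI[of _ "i \<oplus> j"]) (simp add: a_eq)
    qed
    show "\<pi> b \<subseteq> \<pi> a" unfolding coset_def
    proof clarify
      fix j assume "j \<in> I"
      then show "\<exists>k. b \<oplus> j = a \<oplus> k \<and> k \<in> I"
        using i a by (intro exI[of _ "\<ominus> i \<oplus> j"]) (simp add: b_eq)
    qed
  qed
qed

lemma coset_nzero: "\<pi> \<zero> = I"
  unfolding coset_def by (auto intro!: exI)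

lemma coset_eq_ideal_iff: "a \<in> N \<Longrightarrow> \<pi> a = I \<longleftrightarrow> a \<in> I"
  using coset_eq_iff[of a \<zero>] by (simp add: coset_nzero)

lemma carrier_quot: "carrier Q = \<pi> ` N"
  by (simp add: quot_def)

lemma Union_cosets_congruent1:
  assumes "a \<in> N" and "\<And>x. x \<in> \<pi> a \<Longrightarrow> \<pi> (f x) = \<pi> (f a)"
  shows "\<Union>{\<pi> (f x) | x. x \<in> \<pi> a} = \<pi> (f a)"
  using assms coset_self[OF assms(1)] by blast

lemma Union_cosets_congruent2:
  assumes "a \<in> N" "b \<in> N" and "\<And>x y. x \<in> \<pi> a \<Longrightarrow> y \<in> \<pi> b \<Longrightarrow> \<pi> (f x y) = \<pi> (f a b)"
  shows "\<Union>{\<pi> (f x y) | x y. x \<in> \<pi> a \<and> y \<in> \<pi> b} = \<pi> (f a b)"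
  using assms coset_self[OF assms(1)] coset_self[OF assms(2)] by blast

lemma quot_nzero: "nzero Q = \<pi> \<zero>"
  by (simp add: quot_def)

lemma quot_nadd: "a \<in> N \<Longrightarrow> b \<in> N \<Longrightarrow> nadd Q (\<pi> a) (\<pi> b) = \<pi> (a \<oplus> b)"
  unfolding quot_def
proof (simp, rule Union_cosets_congruent2)
  fix x y assume ab: "a \<in> N" "b \<in> N" and "x \<in> \<pi> a" "y \<in> \<pi> b"
  then obtain i j where ij: "i \<in> I" "j \<in> I" "x = a \<oplus> i" "y = b \<oplus> j"
    unfolding coset_def by auto
  have "\<ominus> (a \<oplus> b) \<oplus> (x \<oplus> y) = (\<ominus> b \<oplus> i \<oplus> b) \<oplus> j" using ab ij by simp
  also have "\<dots> \<in> I" using ab ij by simp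
  finally show "\<pi> (x \<oplus> y) = \<pi> (a \<oplus> b)" using ab ij coset_eq_iff by simp
qed auto

lemma quot_nneg: "a \<in> N \<Longrightarrow> nneg Q (\<pi> a) = \<pi> (\<ominus> a)"
  unfolding quot_def
proof (simp, rule Union_cosets_congruent1)
  fix x assume a: "a \<in> N" and "x \<in> \<pi> a"
  then obtain i where i: "i \<in> I" "x = a \<oplus> i" unfolding coset_def by auto
  have "\<ominus> (\<ominus> a) \<oplus> \<ominus> x = a \<oplus> \<ominus> i \<oplus> \<ominus> a" using a i by simp
  also have "\<dots> \<in> I" using a i by simp
  finally show "\<pi> (\<ominus> x) = \<pi> (\<ominus> a)" using a i coset_eq_iff by simp
qed auto

lemma quot_nmul: "a \<in> N \<Longrightarrow> b \<in> N \<Longrightarrow> nmul Q (\<pi> a) (\<pi> b) = \<pi> (a \<otimes> b)"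
  unfolding quot_def
proof (simp, rule Union_cosets_congruent2)
  fix x y assume ab: "a \<in> N" "b \<in> N" and "x \<in> \<pi> a" "y \<in> \<pi> b"
  then obtain i j where ij: "i \<in> I" "j \<in> I" "x = a \<oplus> i" "y = b \<oplus> j"
    unfolding coset_def by auto
  define k where "k = a \<otimes> (b \<oplus> j) \<oplus> \<ominus> (a \<otimes> b)"
  have k: "k \<in> I" using ideal_nmul_left[of a b j] ab ij k_def by simp
  have k_eq: "a \<otimes> (b \<oplus> j) = k \<oplus> a \<otimes> b" using ab ij k_def by simp
  have m: "i \<otimes> (b \<oplus> j) \<in> I" using ideal_nmul_right ij ab by simp
  have "x \<otimes> y = a \<otimes> (b \<oplus> j) \<oplus> i \<otimes> (b \<oplus> j)" using ij ab nmul_distrib_right by simp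
  then have "\<ominus> (a \<otimes> b) \<oplus> (x \<otimes> y) = (\<ominus> (a \<otimes> b) \<oplus> k \<oplus> a \<otimes> b) \<oplus> i \<otimes> (b \<oplus> j)"
    using k_eq ab ij k by simp
  also have "\<dots> \<in> I" using ab ij k m by simp
  finally show "\<pi> (x \<otimes> y) = \<pi> (a \<otimes> b)" using ab ij coset_eq_iff by simp
qed auto

lemma quot_nsub: "a \<in> N \<Longrightarrow> b \<in> N \<Longrightarrow> nsub Q (\<pi> a) (\<pi> b) = \<pi> (a \<oplus> \<ominus> b)"
  by (simp add: nsub_def quot_nneg quot_nadd)

lemma nr_ideal_image:
  assumes J: "nr_ideal R J"
  shows "nr_ideal Q (\<pi> ` J)"
proof -
  have ns: "add_normal_subgroup R J" using J by (rule nr_ideal_normal_subgroup)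
  have J_N: "\<And>j. j \<in> J \<Longrightarrow> j \<in> N" using normal_subgroup_carrier[OF ns] by blast
  have mul_J: "\<And>i n. i \<in> J \<Longrightarrow> n \<in> N \<Longrightarrow> i \<otimes> n \<in> J"
    and mul_left_J: "\<And>n n' i. n \<in> N \<Longrightarrow> n' \<in> N \<Longrightarrow> i \<in> J \<Longrightarrow>
        nsub R (n \<otimes> (n' \<oplus> i)) (n \<otimes> n') \<in> J"
    using J by (auto simp: nr_ideal_def)
  show ?thesis unfolding nr_ideal_def add_normal_subgroup_def
  proof (intro conjI ballI)
    show "\<pi> ` J \<subseteq> carrier Q" using J_N carrier_quot by auto
    show "nzero Q \<in> \<pi> ` J" using quot_nzero normal_subgroup_zero[OF ns] by auto
  next
    fix x y assume "x \<in> \<pi> ` J" "y \<in> \<pi> ` J"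
    then show "nadd Q x y \<in> \<pi> ` J" using quot_nadd J_N normal_subgroup_add[OF ns] by auto
  next
    fix x assume "x \<in> \<pi> ` J"
    then show "nneg Q x \<in> \<pi> ` J" using quot_nneg J_N normal_subgroup_neg[OF ns] by auto
  next
    fix n h assume "n \<in> carrier Q" "h \<in> \<pi> ` J"
    then obtain m a where "m \<in> N" "n = \<pi> m" "a \<in> J" "h = \<pi> a" using carrier_quot by auto
    then show "nsub Q (nadd Q n h) n \<in> \<pi> ` J"
      using normal_subgroup_conj[OF ns] J_N by (simp add: quot_nadd quot_nsub)
  next
    fix i n assume "i \<in> \<pi> ` J" "n \<in> carrier Q"
    then obtain a m where "a \<in> J" "i = \<pi> a" "m \<in> N" "n = \<pi> m" using carrier_quot by auto
    then show "nmul Q i n \<in> \<pi> ` J" using mul_J J_N by (simp add: quot_nmul)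
  next
    fix n n' i assume "n \<in> carrier Q" "n' \<in> carrier Q" "i \<in> \<pi> ` J"
    then obtain m m' a where "m \<in> N" "n = \<pi> m" "m' \<in> N" "n' = \<pi> m'" "a \<in> J" "i = \<pi> a"
      using carrier_quot by auto
    then show "nsub Q (nmul Q n (nadd Q n' i)) (nmul Q n n') \<in> \<pi> ` J"
      using mul_left_J[of m m' a] J_N by (simp add: quot_nadd quot_nmul quot_nsub nsub_eq)
  qed
qed

definition preimage :: "'a set set \<Rightarrow> 'a set" where
  "preimage J' = {x \<in> N. \<pi> x \<in> J'}"

lemma preimage_carrier: "preimage J' \<subseteq> N"
  by (auto simp: preimage_def)

lemma image_preimage: "J' \<subseteq> carrier Q \<Longrightarrow> \<pi> ` preimage J' = J'"
  unfolding preimage_def using carrier_quot by auto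

lemma subset_preimage_iff: "X \<subseteq> N \<Longrightarrow> X \<subseteq> preimage J' \<longleftrightarrow> \<pi> ` X \<subseteq> J'"
  unfolding preimage_def by auto

lemma ideal_subset_preimage: "nzero Q \<in> J' \<Longrightarrow> I \<subseteq> preimage J'"
proof
  fix i assume "nzero Q \<in> J'" and "i \<in> I"
  then have "\<pi> i = nzero Q" using coset_eq_ideal_iff by (simp add: quot_nzero coset_nzero)
  then show "i \<in> preimage J'" using \<open>nzero Q \<in> J'\<close> \<open>i \<in> I\<close> by (simp add: preimage_def)
qed

lemma preimage_image:
  assumes "H \<subseteq> N" and "I \<subseteq> H" and add_H: "\<And>x y. x \<in> H \<Longrightarrow> y \<in> H \<Longrightarrow> x \<oplus> y \<in> H"
  shows "preimage (\<pi> ` H) = H"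
proof
  show "H \<subseteq> preimage (\<pi> ` H)" using \<open>H \<subseteq> N\<close> by (auto simp: preimage_def)
  show "preimage (\<pi> ` H) \<subseteq> H"
  proof
    fix a assume "a \<in> preimage (\<pi> ` H)"
    then obtain h where a: "a \<in> N" and h: "h \<in> H" "\<pi> a = \<pi> h" by (auto simp: preimage_def)
    have "h \<in> N" using h \<open>H \<subseteq> N\<close> by blast
    then have "\<ominus> h \<oplus> a \<in> H" using h coset_eq_iff[OF a] \<open>I \<subseteq> H\<close> by blast
    then have "h \<oplus> (\<ominus> h \<oplus> a) \<in> H" using add_H h by blast
    then show "a \<in> H" using \<open>h \<in> N\<close> a by simp
  qed
qed

lemma nr_ideal_preimage:
  assumes J': "nr_ideal Q J'"
  shows "nr_ideal R (preimage J')"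
proof -
  have zero: "nzero Q \<in> J'"
    and add: "\<And>x y. x \<in> J' \<Longrightarrow> y \<in> J' \<Longrightarrow> nadd Q x y \<in> J'"
    and neg: "\<And>x. x \<in> J' \<Longrightarrow> nneg Q x \<in> J'"
    and conj: "\<And>n h. n \<in> carrier Q \<Longrightarrow> h \<in> J' \<Longrightarrow> nsub Q (nadd Q n h) n \<in> J'"
    and mul: "\<And>i n. i \<in> J' \<Longrightarrow> n \<in> carrier Q \<Longrightarrow> nmul Q i n \<in> J'"
    and mul_left: "\<And>n n' i. n \<in> carrier Q \<Longrightarrow> n' \<in> carrier Q \<Longrightarrow> i \<in> J' \<Longrightarrow>
        nsub Q (nmul Q n (nadd Q n' i)) (nmul Q n n') \<in> J'"
    using J' by (auto simp: nr_ideal_def add_normal_subgroup_def)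
  have \<pi>_N: "\<And>x. x \<in> N \<Longrightarrow> \<pi> x \<in> carrier Q" using carrier_quot by auto
  show ?thesis unfolding nr_ideal_def add_normal_subgroup_def
  proof (intro conjI ballI)
    show "preimage J' \<subseteq> N" by (rule preimage_carrier)
    show "\<zero> \<in> preimage J'" using zero by (simp add: preimage_def quot_nzero)
  next
    fix x y assume "x \<in> preimage J'" "y \<in> preimage J'"
    then show "x \<oplus> y \<in> preimage J'" using add[of "\<pi> x" "\<pi> y"] by (simp add: preimage_def quot_nadd)
  next
    fix x assume "x \<in> preimage J'"
    then show "\<ominus> x \<in> preimage J'" using neg[of "\<pi> x"] by (simp add: preimage_def quot_nneg)
  next
    fix n h assume "n \<in> N" "h \<in> preimage J'"
    then show "nsub R (n \<oplus> h) n \<in> preimage J'" using conj[of "\<pi> n" "\<pi> h"] \<pi>_N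
      by (simp add: preimage_def quot_nadd quot_nsub nsub_eq)
  next
    fix i n assume "i \<in> preimage J'" "n \<in> N"
    then show "i \<otimes> n \<in> preimage J'" using mul[of "\<pi> i" "\<pi> n"] \<pi>_N
      by (simp add: preimage_def quot_nmul)
  next
    fix n n' i assume "n \<in> N" "n' \<in> N" "i \<in> preimage J'"
    then show "nsub R (n \<otimes> (n' \<oplus> i)) (n \<otimes> n') \<in> preimage J'"
      using mul_left[of "\<pi> n" "\<pi> n'" "\<pi> i"] \<pi>_N
      by (simp add: preimage_def quot_nmul quot_nadd quot_nsub nsub_eq)
  qed
qed

lemma gen_add_quot_image_subset:
  assumes "S \<subseteq> N" and "c \<in> gen_add Q (\<pi> ` S)"
  shows "c \<in> \<pi> ` gen_add R S"
  using assms(2)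
proof (induction rule: gen_add.induct)
  case (gen_incl c)
  then show ?case by (auto intro: gen_add.gen_incl)
next
  case gen_zero
  then show ?case by (auto simp: quot_nzero intro: gen_add.gen_zero)
next
  case (gen_neg c)
  then obtain y where y: "y \<in> gen_add R S" "c = \<pi> y" by blast
  moreover have "y \<in> N" using y gen_add_subset_carrier assms(1) by blast
  ultimately show ?case by (auto simp: quot_nneg intro: gen_add.gen_neg)
next
  case (gen_add c d)
  then obtain y z where yz: "y \<in> gen_add R S" "c = \<pi> y" "z \<in> gen_add R S" "d = \<pi> z" by blast
  moreover have "y \<in> N" "z \<in> N" using yz gen_add_subset_carrier assms(1) by blast+
  ultimately show ?case by (auto simp: quot_nadd intro: gen_add.gen_add)
qed

lemma coset_gen_add_subset:
  assumes "S \<subseteq> N" and "x \<in> gen_add R S"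
  shows "\<pi> x \<in> gen_add Q (\<pi> ` S)"
  using assms(2)
proof (induction rule: gen_add.induct)
  case (gen_incl x)
  then show ?case by (auto intro: gen_add.gen_incl)
next
  case gen_zero
  then show ?case using gen_add.gen_zero[of Q "\<pi> ` S"] by (simp add: quot_nzero)
next
  case (gen_neg x)
  have "x \<in> N" using gen_neg.hyps gen_add_subset_carrier assms(1) by blast
  then show ?case using gen_add.gen_neg[OF gen_neg.IH] by (simp add: quot_nneg)
next
  case (gen_add x y)
  have "x \<in> N" "y \<in> N" using gen_add.hyps gen_add_subset_carrier assms(1) by blast+
  then show ?case using gen_add.gen_add[OF gen_add.IH] by (simp add: quot_nadd)
qed

lemma gen_add_image_coset: "S \<subseteq> N \<Longrightarrow> gen_add Q (\<pi> ` S) = \<pi> ` gen_add R S"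
  using gen_add_quot_image_subset coset_gen_add_subset by blast

lemma image_set_prod:
  assumes "X \<subseteq> N" and "Y \<subseteq> N"
  shows "\<pi> ` set_prod R X Y = set_prod Q (\<pi> ` X) (\<pi> ` Y)"
proof -
  have "\<pi> ` set_prod R X Y = {\<pi> (x \<otimes> y) | x y. x \<in> X \<and> y \<in> Y}"
    unfolding set_prod_def by blast
  also have "\<dots> = {nmul Q (\<pi> x) (\<pi> y) | x y. x \<in> X \<and> y \<in> Y}"
    using assms by (metis (no_types, opaque_lifting) quot_nmul subsetD)
  also have "\<dots> = set_prod Q (\<pi> ` X) (\<pi> ` Y)"
    unfolding set_prod_def by blast
  finally show ?thesis .
qed

lemma set_prod_quot:
  assumes "A' \<subseteq> carrier Q" and "B' \<subseteq> carrier Q"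
  shows "set_prod Q A' B' = \<pi> ` set_prod R (preimage A') (preimage B')"
  using image_set_prod[OF preimage_carrier preimage_carrier]
  by (simp add: image_preimage assms)

lemma set_prod_preimage_subset:
  assumes "preimage (\<pi> ` P) = P" and "A' \<subseteq> carrier Q" and "B' \<subseteq> carrier Q"
    and "set_prod Q A' B' \<subseteq> \<pi> ` P"
  shows "set_prod R (preimage A') (preimage B') \<subseteq> P"
proof -
  have "\<pi> ` set_prod R (preimage A') (preimage B') \<subseteq> \<pi> ` P"
    using assms(4) set_prod_quot[OF assms(2,3)] by simp
  then have "set_prod R (preimage A') (preimage B') \<subseteq> preimage (\<pi> ` P)"
    by (simp add: subset_preimage_iff set_prod_subset_carrier preimage_carrier)
  then show ?thesis using assms(1) by simp
qed

lemma set_prod_preimage_not_subset: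
  assumes "P \<subseteq> N" and "A' \<subseteq> carrier Q" and "B' \<subseteq> carrier Q"
    and "\<not> set_prod Q A' B' \<subseteq> set_prod Q (\<pi> ` P) (\<pi> ` P) \<inter> carrier Q"
  shows "\<not> set_prod R (preimage A') (preimage B') \<subseteq> set_prod R P P \<inter> N"
proof
  assume "set_prod R (preimage A') (preimage B') \<subseteq> set_prod R P P \<inter> N"
  then have "\<pi> ` set_prod R (preimage A') (preimage B') \<subseteq> \<pi> ` set_prod R P P \<inter> \<pi> ` N" by blast
  then show False
    using assms(4) set_prod_quot[OF assms(2,3)] image_set_prod[OF assms(1,1)] carrier_quot by simp
qed

end

locale graded_near_ring_base = near_ring_base +
  fixes F :: "'g::monoid_mult \<Rightarrow> 'a set"
  assumes graded: "graded_near_ring R F"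
begin

lemma component_normal_subgroup: "add_normal_subgroup R (F \<sigma>)"
  using graded by (simp add: graded_near_ring_def)

lemma component_carrier: "x \<in> F \<sigma> \<Longrightarrow> x \<in> N"
  using normal_subgroup_carrier[OF component_normal_subgroup] by blast

definition other_components :: "'g \<Rightarrow> 'a set" where
  "other_components \<sigma> = gen_add R (\<Union>\<tau>\<in>-{\<sigma>}. F \<tau>)"

lemma component_inter_other_components: "F \<sigma> \<inter> other_components \<sigma> = {\<zero>}"
  using graded by (simp add: graded_near_ring_def internal_direct_sum_def other_components_def)

lemma other_components_carrier: "other_components \<sigma> \<subseteq> N"
  unfolding other_components_def by (rule gen_add_subset_carrier) (auto intro: component_carrier)

lemma other_components_nadd: "x \<in> other_components \<sigma> \<Longrightarrow> y \<in> other_components \<sigma> \<Longrightarrow> x \<oplus> y \<in> other_components \<sigma>"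
  and other_components_nneg: "x \<in> other_components \<sigma> \<Longrightarrow> \<ominus> x \<in> other_components \<sigma>"
  and other_components_nzero: "\<zero> \<in> other_components \<sigma>"
  unfolding other_components_def by (auto intro: gen_add.intros)

lemma other_components_conj:
  assumes "n \<in> N" and "h \<in> other_components \<sigma>"
  shows "n \<oplus> h \<oplus> \<ominus> n \<in> other_components \<sigma>"
  using \<open>h \<in> other_components \<sigma>\<close> unfolding other_components_def
proof (rule gen_add_conj_closed[OF _ _ \<open>n \<in> N\<close>, rotated 2])
  show "(\<Union>\<tau>\<in>-{\<sigma>}. F \<tau>) \<subseteq> N" by (auto intro: component_carrier)
  fix m x assume "m \<in> N" "x \<in> (\<Union>\<tau>\<in>-{\<sigma>}. F \<tau>)"
  then obtain \<tau> where "\<tau> \<noteq> \<sigma>" "m \<oplus> x \<oplus> \<ominus> m \<in> F \<tau>"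
    using normal_subgroup_conj[OF component_normal_subgroup] by blast
  then show "m \<oplus> x \<oplus> \<ominus> m \<in> gen_add R (\<Union>\<tau>\<in>-{\<sigma>}. F \<tau>)" by (auto intro: gen_add.gen_incl)
qed

lemma component_other_components_commute:
  assumes x: "x \<in> F \<sigma>" and y: "y \<in> other_components \<sigma>"
  shows "x \<oplus> y = y \<oplus> x"
proof -
  have xN: "x \<in> N" using x component_carrier by blast
  have yN: "y \<in> N" using y other_components_carrier by blast
  have "(x \<oplus> y \<oplus> \<ominus> x) \<oplus> \<ominus> y \<in> other_components \<sigma>"
    using other_components_conj[OF xN y] other_components_nadd other_components_nneg y by blast
  then have in_other: "x \<oplus> y \<oplus> \<ominus> x \<oplus> \<ominus> y \<in> other_components \<sigma>" using xN yN by simp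
  have "y \<oplus> \<ominus> x \<oplus> \<ominus> y \<in> F \<sigma>"
    using normal_subgroup_conj[OF component_normal_subgroup yN normal_subgroup_neg[OF component_normal_subgroup x]] .
  then have "x \<oplus> y \<oplus> \<ominus> x \<oplus> \<ominus> y \<in> F \<sigma>"
    using normal_subgroup_add[OF component_normal_subgroup x] by blast
  with in_other have "x \<oplus> y \<oplus> \<ominus> x \<oplus> \<ominus> y = \<zero>"
    using component_inter_other_components by blast
  moreover have "(x \<oplus> y) \<oplus> \<ominus> (y \<oplus> x) = x \<oplus> y \<oplus> \<ominus> x \<oplus> \<ominus> y" using xN yN by simp
  ultimately have "\<ominus> (y \<oplus> x) = \<ominus> (x \<oplus> y)" using xN yN by (intro nneg_unique) auto
  then have "\<ominus> (\<ominus> (y \<oplus> x)) = \<ominus> (\<ominus> (x \<oplus> y))" by simp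
  then show ?thesis using xN yN by simp
qed

lemma nneg_component_split:
  assumes "a \<in> F \<sigma>" and "h \<in> other_components \<sigma>"
  shows "\<ominus> (a \<oplus> h) = \<ominus> a \<oplus> \<ominus> h"
proof -
  have "a \<in> N" "h \<in> N" using assms component_carrier other_components_carrier by blast+
  moreover have "\<ominus> a \<in> F \<sigma>" "\<ominus> h \<in> other_components \<sigma>"
    using assms normal_subgroup_neg[OF component_normal_subgroup] other_components_nneg by blast+
  ultimately show ?thesis using component_other_components_commute[of "\<ominus> a" \<sigma> "\<ominus> h"] by simp
qed

lemma nadd_component_split:
  assumes "a \<in> F \<sigma>" "b \<in> F \<sigma>" and "h \<in> other_components \<sigma>" "k \<in> other_components \<sigma>"
  shows "(a \<oplus> h) \<oplus> (b \<oplus> k) = (a \<oplus> b) \<oplus> (h \<oplus> k)"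
proof -
  have N: "a \<in> N" "h \<in> N" "b \<in> N" "k \<in> N"
    using assms component_carrier other_components_carrier by blast+
  have "(a \<oplus> h) \<oplus> (b \<oplus> k) = a \<oplus> (h \<oplus> b) \<oplus> k" using N by simp
  also have "\<dots> = a \<oplus> (b \<oplus> h) \<oplus> k"
    using component_other_components_commute[of b \<sigma> h] assms by simp
  also have "\<dots> = (a \<oplus> b) \<oplus> (h \<oplus> k)" using N by simp
  finally show ?thesis .
qed

lemma homogeneous_split:
  assumes "\<zero> \<in> J" and x: "x \<in> J \<inter> F \<tau>"
  shows "\<exists>a h. a \<in> J \<inter> F \<sigma> \<and> h \<in> other_components \<sigma> \<and> x = a \<oplus> h"
proof -
  have xN: "x \<in> N" using x component_carrier by blast
  show ?thesis
  proof (cases "\<tau> = \<sigma>")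
    case True
    then have "x \<in> J \<inter> F \<sigma> \<and> \<zero> \<in> other_components \<sigma> \<and> x = x \<oplus> \<zero>"
      using x xN other_components_nzero by simp
    then show ?thesis by blast
  next
    case False
    then have "x \<in> other_components \<sigma>"
      using x unfolding other_components_def by (auto intro: gen_add.gen_incl)
    then have "\<zero> \<in> J \<inter> F \<sigma> \<and> x \<in> other_components \<sigma> \<and> x = \<zero> \<oplus> x"
      using xN \<open>\<zero> \<in> J\<close> normal_subgroup_zero[OF component_normal_subgroup] by simp
    then show ?thesis by blast
  qed
qed

lemma graded_ideal_split:
  assumes J: "graded_ideal R F J" and "j \<in> J"
  shows "\<exists>a h. a \<in> J \<inter> F \<sigma> \<and> h \<in> other_components \<sigma> \<and> j = a \<oplus> h"
proof -
  have ns: "add_normal_subgroup R J" using J graded_ideal_nr_ideal nr_ideal_normal_subgroup by blast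
  have zero: "\<zero> \<in> J \<inter> F \<sigma>"
    using normal_subgroup_zero[OF component_normal_subgroup] normal_subgroup_zero[OF ns] by blast
  have "j \<in> gen_add R (\<Union>\<tau>. J \<inter> F \<tau>)" using graded_ideal_gen_add[OF J] \<open>j \<in> J\<close> by blast
  then show ?thesis
  proof (induction rule: gen_add.induct)
    case (gen_incl x)
    then show ?case using homogeneous_split zero by blast
  next
    case gen_zero
    then show ?case using homogeneous_split zero by blast
  next
    case (gen_neg x)
    then obtain a h where ah: "a \<in> J \<inter> F \<sigma>" "h \<in> other_components \<sigma>" "x = a \<oplus> h" by blast
    then have "\<ominus> x = \<ominus> a \<oplus> \<ominus> h" using nneg_component_split[of a \<sigma> h] by blast
    moreover have "\<ominus> a \<in> J \<inter> F \<sigma>" "\<ominus> h \<in> other_components \<sigma>"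
      using ah normal_subgroup_neg[OF ns] normal_subgroup_neg[OF component_normal_subgroup]
        other_components_nneg by blast+
    ultimately show ?case by blast
  next
    case (gen_add x y)
    then obtain a h b k where ah: "a \<in> J \<inter> F \<sigma>" "h \<in> other_components \<sigma>" "x = a \<oplus> h"
      and bk: "b \<in> J \<inter> F \<sigma>" "k \<in> other_components \<sigma>" "y = b \<oplus> k" by metis
    then have "x \<oplus> y = (a \<oplus> b) \<oplus> (h \<oplus> k)" using nadd_component_split[of a \<sigma> b h k] by blast
    moreover have "a \<oplus> b \<in> J \<inter> F \<sigma>" "h \<oplus> k \<in> other_components \<sigma>"
      using ah bk normal_subgroup_add[OF ns] normal_subgroup_add[OF component_normal_subgroup]
        other_components_nadd by blast+
    ultimately show ?case by blast
  qed
qed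

end

locale graded_quotient = quotient_near_ring R I + graded_near_ring_base R F
  for R :: "('a, 'b) nearring_scheme" and I :: "'a set" and F :: "'g::monoid_mult \<Rightarrow> 'a set" +
  assumes graded_ideal: "graded_ideal R F I"
begin

text \<open>Splitting \<open>-y + f \<in> I\<close> into a part \<open>a\<close> of degree \<open>\<sigma>\<close> and a part of other degrees
  gives \<open>-a + f \<in> F \<sigma> \<inter> other_components \<sigma> = {0}\<close>.\<close>

lemma congruent_component_in_ideal:
  assumes f: "f \<in> F \<sigma>" and y: "y \<in> other_components \<sigma>" and "\<pi> f = \<pi> y"
  shows "f \<in> I"
proof -
  have fN: "f \<in> N" using f component_carrier by blast
  have yN: "y \<in> N" using y other_components_carrier by blast
  have "\<ominus> y \<oplus> f \<in> I" using \<open>\<pi> f = \<pi> y\<close> coset_eq_iff fN yN by blast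
  then obtain a h where ah: "a \<in> I \<inter> F \<sigma>" "h \<in> other_components \<sigma>" "\<ominus> y \<oplus> f = a \<oplus> h"
    using graded_ideal_split[OF graded_ideal] by blast
  have aN: "a \<in> N" using ah component_carrier by blast
  have hN: "h \<in> N" using ah other_components_carrier by blast
  have "f = y \<oplus> (\<ominus> y \<oplus> f)" using yN fN by simp
  also have "\<dots> = (y \<oplus> a) \<oplus> h" using yN aN hN by (simp add: ah(3))
  also have "\<dots> = (a \<oplus> y) \<oplus> h" using component_other_components_commute[of a \<sigma> y] ah(1) y by simp
  finally have "\<ominus> a \<oplus> f = y \<oplus> h" using aN yN hN by simp
  moreover have "y \<oplus> h \<in> other_components \<sigma>" using y ah(2) other_components_nadd by blast
  ultimately have "\<ominus> a \<oplus> f \<in> other_components \<sigma>" by simp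
  moreover have "\<ominus> a \<oplus> f \<in> F \<sigma>"
    using ah(1) f normal_subgroup_add[OF component_normal_subgroup]
      normal_subgroup_neg[OF component_normal_subgroup] by blast
  ultimately have "\<ominus> a \<oplus> f = \<zero>" using component_inter_other_components by blast
  then have "a \<oplus> (\<ominus> a \<oplus> f) = a" using aN by simp
  then have "f = a" using aN fN by simp
  then show ?thesis using ah(1) by blast
qed

lemma quot_components_independent:
  "quot_grading R I F \<sigma> \<inter> gen_add Q (\<Union>\<tau>\<in>-{\<sigma>}. quot_grading R I F \<tau>) = {nzero Q}"
proof
  have "(\<Union>\<tau>\<in>-{\<sigma>}. quot_grading R I F \<tau>) = \<pi> ` (\<Union>\<tau>\<in>-{\<sigma>}. F \<tau>)"
    by (auto simp: quot_grading_def)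
  then have other: "gen_add Q (\<Union>\<tau>\<in>-{\<sigma>}. quot_grading R I F \<tau>) = \<pi> ` other_components \<sigma>"
    unfolding other_components_def by (simp add: gen_add_image_coset component_carrier subset_eq)
  show "quot_grading R I F \<sigma> \<inter> gen_add Q (\<Union>\<tau>\<in>-{\<sigma>}. quot_grading R I F \<tau>) \<subseteq> {nzero Q}"
  proof
    fix c assume "c \<in> quot_grading R I F \<sigma> \<inter> gen_add Q (\<Union>\<tau>\<in>-{\<sigma>}. quot_grading R I F \<tau>)"
    then obtain f y where f: "f \<in> F \<sigma>" "c = \<pi> f" and y: "y \<in> other_components \<sigma>" "c = \<pi> y"
      unfolding other by (auto simp: quot_grading_def)
    have "f \<in> I" using congruent_component_in_ideal[OF f(1) y(1)] f y by simp
    then show "c \<in> {nzero Q}"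
      using f component_carrier coset_eq_ideal_iff by (simp add: quot_nzero coset_nzero)
  qed
  show "{nzero Q} \<subseteq> quot_grading R I F \<sigma> \<inter> gen_add Q (\<Union>\<tau>\<in>-{\<sigma>}. quot_grading R I F \<tau>)"
    using normal_subgroup_zero[OF component_normal_subgroup] gen_add.gen_zero[of Q]
    by (auto simp: quot_grading_def quot_nzero)
qed

lemma graded_ideal_image:
  assumes P: "graded_ideal R F P"
  shows "graded_ideal Q (quot_grading R I F) (\<pi> ` P)"
proof -
  have ideal_Q: "nr_ideal Q (\<pi> ` P)" using graded_ideal_nr_ideal[OF P] by (rule nr_ideal_image)
  have P_N: "P \<subseteq> N" using graded_ideal_nr_ideal[OF P] by (rule nr_ideal_subset_carrier)
  have "\<pi> ` P = \<pi> ` gen_add R (\<Union>\<sigma>. P \<inter> F \<sigma>)"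
    using graded_ideal_gen_add[OF P] by simp
  also have "\<dots> = gen_add Q (\<pi> ` (\<Union>\<sigma>. P \<inter> F \<sigma>))"
    using P_N by (intro gen_add_image_coset[symmetric]) blast
  also have "\<dots> \<subseteq> gen_add Q (\<Union>\<sigma>. \<pi> ` P \<inter> quot_grading R I F \<sigma>)"
    by (rule gen_add_mono) (auto simp: quot_grading_def)
  finally have "\<pi> ` P \<subseteq> gen_add Q (\<Union>\<sigma>. \<pi> ` P \<inter> quot_grading R I F \<sigma>)" .
  moreover have "gen_add Q (\<Union>\<sigma>. \<pi> ` P \<inter> quot_grading R I F \<sigma>) \<subseteq> \<pi> ` P"
    using nr_ideal_normal_subgroup[OF ideal_Q] by (rule gen_add_least) blast
  moreover have "(\<pi> ` P \<inter> quot_grading R I F \<sigma>) \<inter>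
      gen_add Q (\<Union>\<tau>\<in>-{\<sigma>}. \<pi> ` P \<inter> quot_grading R I F \<tau>) = {nzero Q}" for \<sigma>
  proof (rule independent_components_restrict[OF quot_components_independent])
    show "nzero Q \<in> \<pi> ` P" using ideal_Q by (rule nr_ideal_nzero)
    show "nzero Q \<in> quot_grading R I F \<sigma>"
      using normal_subgroup_zero[OF component_normal_subgroup] by (simp add: quot_grading_def quot_nzero)
  qed
  ultimately show ?thesis using ideal_Q by (intro graded_idealI) auto
qed

lemma graded_ideal_preimage:
  assumes J': "graded_ideal Q (quot_grading R I F) J'"
  shows "graded_ideal R F (preimage J')"
proof -
  define A where "A = preimage J'"
  define G where "G = gen_add R (\<Union>\<sigma>. A \<inter> F \<sigma>)"
  have ideal_Q: "nr_ideal Q J'" using J' by (rule graded_ideal_nr_ideal)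
  then have ideal_A: "nr_ideal R A" unfolding A_def by (rule nr_ideal_preimage)
  have A_N: "A \<subseteq> N" unfolding A_def by (rule preimage_carrier)
  have G_N: "G \<subseteq> N" unfolding G_def using A_N by (intro gen_add_subset_carrier) blast
  have "J' = gen_add Q (\<Union>\<sigma>. J' \<inter> quot_grading R I F \<sigma>)"
    using J' by (rule graded_ideal_gen_add)
  also have "(\<Union>\<sigma>. J' \<inter> quot_grading R I F \<sigma>) = \<pi> ` (\<Union>\<sigma>. A \<inter> F \<sigma>)"
    by (auto simp: quot_grading_def A_def preimage_def component_carrier)
  also have "gen_add Q \<dots> = \<pi> ` G"
    unfolding G_def using A_N by (intro gen_add_image_coset) blast
  finally have J'_eq: "J' = \<pi> ` G" .
  have "I \<subseteq> A" using nr_ideal_nzero[OF ideal_Q] unfolding A_def by (rule ideal_subset_preimage)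
  then have "gen_add R (\<Union>\<sigma>. I \<inter> F \<sigma>) \<subseteq> G" unfolding G_def by (intro gen_add_mono) blast
  then have "I \<subseteq> G" using graded_ideal_gen_add[OF graded_ideal] by simp
  have "A = preimage (\<pi> ` G)" using A_def J'_eq by simp
  also have "\<dots> = G"
    using G_N \<open>I \<subseteq> G\<close> by (rule preimage_image) (simp add: G_def gen_add.gen_add)
  finally have "A = G" .
  moreover have "(A \<inter> F \<sigma>) \<inter> gen_add R (\<Union>\<tau>\<in>-{\<sigma>}. A \<inter> F \<tau>) = {\<zero>}" for \<sigma>
  proof (rule independent_components_restrict)
    show "F \<sigma> \<inter> gen_add R (\<Union>\<tau>\<in>-{\<sigma>}. F \<tau>) = {\<zero>}"
      using component_inter_other_components by (simp add: other_components_def)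
    show "\<zero> \<in> A" using ideal_A by (rule nr_ideal_nzero)
    show "\<zero> \<in> F \<sigma>" using normal_subgroup_zero[OF component_normal_subgroup] .
  qed
  ultimately show ?thesis using ideal_A unfolding A_def G_def by (intro graded_idealI) auto
qed

end

theorem theorem14:
  fixes R :: "('a, 'b) nearring_scheme" and F :: "'g::monoid_mult \<Rightarrow> 'a set"
    and P I :: "'a set"
  assumes "graded_near_ring R F"
    and "graded_ideal R F P" and "graded_ideal R F I" and "I \<subseteq> P"
    and "graded_almost_prime R F P"
  shows "graded_almost_prime (quot R I) (quot_grading R I F) (coset R I ` P)"
proof -
  interpret graded_quotient R I F
    using assms(1,3) by unfold_locales (simp_all add: graded_near_ring_def graded_ideal_nr_ideal)
  have P_ideal: "nr_ideal R P" using assms(2) by (rule graded_ideal_nr_ideal)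
  then have P_N: "P \<subseteq> N" by (rule nr_ideal_subset_carrier)
  have P_saturated: "preimage (\<pi> ` P) = P"
    using P_N assms(4) normal_subgroup_add[OF nr_ideal_normal_subgroup[OF P_ideal]]
    by (rule preimage_image)
  let ?G = "quot_grading R I F"
  show ?thesis unfolding graded_almost_prime_def
  proof (intro conjI allI impI; (elim conjE)?)
    show "graded_ideal Q ?G (\<pi> ` P)" using assms(2) by (rule graded_ideal_image)
    fix A' B' assume A': "graded_ideal Q ?G A'" and B': "graded_ideal Q ?G B'"
      and in_P: "set_prod Q A' B' \<subseteq> \<pi> ` P"
      and not_in_P2: "\<not> set_prod Q A' B' \<subseteq> set_prod Q (\<pi> ` P) (\<pi> ` P) \<inter> carrier Q"
    have A'_Q: "A' \<subseteq> carrier Q" and B'_Q: "B' \<subseteq> carrier Q"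
      using A' B' by (simp_all add: graded_ideal_nr_ideal nr_ideal_subset_carrier)
    have "preimage A' \<subseteq> P \<or> preimage B' \<subseteq> P"
      using assms(5) graded_ideal_preimage[OF A'] graded_ideal_preimage[OF B']
        set_prod_preimage_subset[OF P_saturated A'_Q B'_Q in_P]
        set_prod_preimage_not_subset[OF P_N A'_Q B'_Q not_in_P2]
      unfolding graded_almost_prime_def by blast
    then have "\<pi> ` preimage A' \<subseteq> \<pi> ` P \<or> \<pi> ` preimage B' \<subseteq> \<pi> ` P"
      by (meson image_mono)
    then show "A' \<subseteq> \<pi> ` P \<or> B' \<subseteq> \<pi> ` P"
      by (simp only: image_preimage[OF A'_Q] image_preimage[OF B'_Q])
  qed
qed

end
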